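(* Let $\mathcal{A}=(Q,\delta,I,F)$ be a complete Büchi automaton with delayed simulation $\preceq_{\mathit{de}}$, and let $p,q,r\in Q$, $a\in\Sigma$ be such that $q\in\delta(r,a)$ and $p\preceq_{\mathit{de}}q$. Let $\mathcal{A}'=(Q,\delta',I,F)$ where $\delta'=\delta\cup\{r\xrightarrow{a}p\}$. Then $\preceq_{\mathit{de}}$ is included in the delayed simulation on $\mathcal{A}'$.
   Context: A Büchi automaton is $\mathcal{A}=(Q,\delta,I,F)$ over a finite alphabet $\Sigma$ with $\delta:Q\times\Sigma\to2^Q$, complete if $\delta(q,a)\ne\emptyset$ always; $r\xrightarrow{a}p\in\delta$ means $p\in\delta(r,a)$, and $\delta\cup\{r\xrightarrow{a}p\}$ denotes the transition function obtained by adding $p$ to $\delta(r,a)$. Delayed simulation on a BA: in the game from $(p_0,r_0)$, in round $i$ Spoiler picks a transition $p_i\xrightarrow{\alpha_i}p_{i+1}$ of the automaton and Duplicator answers with a transition $r_i\xrightarrow{\alpha_i}r_{i+1}$ on the same symbol; a Duplicator strategy is a map $\sigma$ with $\sigma(r,p\xrightarrow{a}p')$ a successor of $r$ under $a$ (no lookahead). Duplicator wins if for all $i$, $p_i\in F$ implies $r_k\in F$ for some $k\ge i$. The delayed simulation relates $(p,r)$ iff Duplicator has a winning strategy from $(p,r)$. *)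

theory Defs
  imports Main
begin

definition is_BA :: "'q set \<Rightarrow> ('q \<Rightarrow> 'a::finite \<Rightarrow> 'q set) \<Rightarrow> 'q set \<Rightarrow> 'q set \<Rightarrow> bool" where
  "is_BA Q \<delta> I F \<longleftrightarrow> finite Q \<and> I \<subseteq> Q \<and> F \<subseteq> Q \<and> (\<forall>q\<in>Q. \<forall>a. \<delta> q a \<subseteq> Q)"

definition complete_BA :: "'q set \<Rightarrow> ('q \<Rightarrow> 'a::finite \<Rightarrow> 'q set) \<Rightarrow> bool" where
  "complete_BA Q \<delta> \<longleftrightarrow> (\<forall>q\<in>Q. \<forall>a. \<delta> q a \<noteq> {})"

definition add_trans :: "('q \<Rightarrow> 'a \<Rightarrow> 'q set) \<Rightarrow> 'q \<Rightarrow> 'a \<Rightarrow> 'q \<Rightarrow> ('q \<Rightarrow> 'a \<Rightarrow> 'q set)" where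
  "add_trans \<delta> r a p = (\<lambda>s b. if s = r \<and> b = a then insert p (\<delta> s b) else \<delta> s b)"

text \<open>A Duplicator strategy: sigma r (p, a, p') is Duplicator's answer from r to Spoiler's move p --a--> p'.\<close>
definition legal_strategy :: "'q set \<Rightarrow> ('q \<Rightarrow> 'a \<Rightarrow> 'q set) \<Rightarrow> ('q \<Rightarrow> 'q \<times> 'a \<times> 'q \<Rightarrow> 'q) \<Rightarrow> bool" where
  "legal_strategy Q \<delta> \<sigma> \<longleftrightarrow>
     (\<forall>r\<in>Q. \<forall>p\<in>Q. \<forall>a. \<forall>p'\<in>\<delta> p a. \<sigma> r (p, a, p') \<in> \<delta> r a)"

fun dup_run :: "('q \<Rightarrow> 'q \<times> 'a \<times> 'q \<Rightarrow> 'q) \<Rightarrow> 'q \<Rightarrow> (nat \<Rightarrow> 'q) \<Rightarrow> (nat \<Rightarrow> 'a) \<Rightarrow> nat \<Rightarrow> 'q" where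
  "dup_run \<sigma> r0 ps as 0 = r0"
| "dup_run \<sigma> r0 ps as (Suc i) = \<sigma> (dup_run \<sigma> r0 ps as i) (ps i, as i, ps (Suc i))"

definition spoiler_run :: "('q \<Rightarrow> 'a \<Rightarrow> 'q set) \<Rightarrow> 'q \<Rightarrow> (nat \<Rightarrow> 'q) \<Rightarrow> (nat \<Rightarrow> 'a) \<Rightarrow> bool" where
  "spoiler_run \<delta> p0 ps as \<longleftrightarrow> ps 0 = p0 \<and> (\<forall>i. ps (Suc i) \<in> \<delta> (ps i) (as i))"

definition delayed_win :: "'q set \<Rightarrow> (nat \<Rightarrow> 'q) \<Rightarrow> (nat \<Rightarrow> 'q) \<Rightarrow> bool" where
  "delayed_win F ps rs \<longleftrightarrow> (\<forall>i. ps i \<in> F \<longrightarrow> (\<exists>k\<ge>i. rs k \<in> F))"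

definition delayed_sim :: "'q set \<Rightarrow> ('q \<Rightarrow> 'a \<Rightarrow> 'q set) \<Rightarrow> 'q set \<Rightarrow> ('q \<times> 'q) set" where
  "delayed_sim Q \<delta> F = {(p, r). p \<in> Q \<and> r \<in> Q \<and>
     (\<exists>\<sigma>. legal_strategy Q \<delta> \<sigma> \<and>
        (\<forall>ps as. spoiler_run \<delta> p ps as \<longrightarrow> delayed_win F ps (dup_run \<sigma> r ps as)))}"

end

theory Submission
  imports Defs
begin

text \<open>Delayed simulation is characterised by ranked simulations: sets \<open>W\<close> of configurations
  \<open>(P, U, b)\<close> closed under Spoiler's moves, where the bit \<open>b\<close> records an obligation of Duplicator
  that is still open (Spoiler has visited \<open>F\<close> since Duplicator last did), together with a rank
  that decreases as long as the obligation stays open. A ranked simulation yields a memoryless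
  winning strategy for Duplicator. Conversely, the configurations reachable under a winning
  strategy form a ranked simulation, ranked by the number of configurations reachable along open
  obligations; this number is finite because \<open>Q\<close> is, and it decreases because no play keeps an
  obligation open forever.

  In the extended automaton Duplicator maintains a chain \<open>P = x\<^sub>0, x\<^sub>1, \<dots>, x\<^sub>k = U\<close> of
  links in \<open>W\<close>. An ordinary move of Spoiler is propagated along the chain, each link answering the
  move produced by its predecessor; a move \<open>r \<rightarrow> p\<close> along the new transition is answered as if
  Spoiler had moved to \<open>q\<close>, and the link \<open>(p, q)\<close> is prefixed to the chain. Chains are ranked
  lexicographically by the distance of their last open link from the end and the rank of that
  link.\<close>

section \<open>Ranked delayed simulations\<close>

abbreviation pending_next :: "'q set \<Rightarrow> bool \<Rightarrow> 'q \<Rightarrow> 'q \<Rightarrow> bool" where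
  "pending_next F b P' U' \<equiv> (b \<or> P' \<in> F) \<and> U' \<notin> F"

primrec pending_at :: "'q set \<Rightarrow> (nat \<Rightarrow> 'q) \<Rightarrow> (nat \<Rightarrow> 'q) \<Rightarrow> nat \<Rightarrow> bool" where
  "pending_at F ps rs 0 = (ps 0 \<in> F \<and> rs 0 \<notin> F)"
| "pending_at F ps rs (Suc i) = pending_next F (pending_at F ps rs i) (ps (Suc i)) (rs (Suc i))"

lemma pending_at_add:
  assumes "ps i \<in> F" and "\<forall>k\<ge>i. rs k \<notin> F"
  shows "pending_at F ps rs (i + j)"
proof (induction j)
  case 0
  with assms show ?case by (cases i) auto
next
  case (Suc j)
  with assms show ?case by simp
qed

locale ranked_delayed_sim =
  fixes \<delta> :: "'q \<Rightarrow> 'a::finite \<Rightarrow> 'q set" and F :: "'q set"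
    and W :: "('q \<times> 'q \<times> bool) set" and \<rho> :: "'q \<times> 'q \<times> bool \<Rightarrow> nat"
  assumes respond: "(P, U, b) \<in> W \<Longrightarrow> P' \<in> \<delta> P a \<Longrightarrow> \<exists>U' \<in> \<delta> U a.
    (P', U', pending_next F b P' U') \<in> W \<and> (b \<and> U' \<notin> F \<longrightarrow> \<rho> (P', U', True) < \<rho> (P, U, True))"
begin

definition response :: "'q \<Rightarrow> 'q \<Rightarrow> bool \<Rightarrow> 'a \<Rightarrow> 'q \<Rightarrow> 'q" where
  "response P U b a P' = (SOME U'. U' \<in> \<delta> U a \<and>
    (P', U', pending_next F b P' U') \<in> W \<and> (b \<and> U' \<notin> F \<longrightarrow> \<rho> (P', U', True) < \<rho> (P, U, True)))"

lemma response_spec: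
  assumes "(P, U, b) \<in> W" and "P' \<in> \<delta> P a"
  defines "U' \<equiv> response P U b a P'"
  shows "U' \<in> \<delta> U a" and "(P', U', pending_next F b P' U') \<in> W"
    and "b \<Longrightarrow> U' \<notin> F \<Longrightarrow> \<rho> (P', U', True) < \<rho> (P, U, True)"
  using someI_ex[OF respond[OF assms(1,2), unfolded Bex_def]]
  unfolding U'_def response_def by blast+

text \<open>Duplicator's strategy cannot see the pending bit. It answers as if the bit were set
  whenever that configuration lies in \<open>W\<close>: the answer then also serves the unset bit,
  since a set bit only adds obligations.\<close>

definition strategy :: "'q \<Rightarrow> 'q \<times> 'a \<times> 'q \<Rightarrow> 'q" where
  "strategy U = (\<lambda>(P, a, P').
     if P' \<in> \<delta> P a \<and> (P, U, True) \<in> W then response P U True a P'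
     else if P' \<in> \<delta> P a \<and> (P, U, False) \<in> W then response P U False a P'
     else (SOME U'. U' \<in> \<delta> U a))"

lemma strategy_legal:
  assumes "complete_BA Q \<delta>"
  shows "legal_strategy Q \<delta> strategy"
  unfolding legal_strategy_def
proof (intro ballI allI)
  fix U P a P' assume "U \<in> Q" and P': "P' \<in> \<delta> P a"
  with assms have "\<delta> U a \<noteq> {}" by (auto simp: complete_BA_def)
  then show "strategy U (P, a, P') \<in> \<delta> U a"
    using response_spec(1)[OF _ P'] by (auto simp: strategy_def some_in_eq)
qed

context
  fixes s t :: 'q and ps rs :: "nat \<Rightarrow> 'q" and as :: "nat \<Rightarrow> 'a"
  assumes start: "(s, t, s \<in> F \<and> t \<notin> F) \<in> W"
    and run: "spoiler_run \<delta> s ps as"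
    and dup: "rs = dup_run strategy t ps as"
begin

lemma strategy_step:
  assumes "(ps i, rs i, b) \<in> W" and "b \<or> (ps i, rs i, True) \<notin> W"
  shows "rs (Suc i) = response (ps i) (rs i) b (as i) (ps (Suc i))"
  using assms run by (cases b) (auto simp: dup strategy_def spoiler_run_def)

lemma strategy_invariant:
  "(ps i, rs i, True) \<in> W \<or> (\<not> pending_at F ps rs i \<and> (ps i, rs i, False) \<in> W)"
proof (induction i)
  case 0
  from run dup start show ?case by (cases "s \<in> F \<and> t \<notin> F") (auto simp: spoiler_run_def)
next
  case (Suc i)
  from run have step: "ps (Suc i) \<in> \<delta> (ps i) (as i)" by (simp add: spoiler_run_def)
  show ?case
  proof (cases "(ps i, rs i, True) \<in> W")
    case True
    from response_spec(2)[OF True step] strategy_step[OF True]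
    have "(ps (Suc i), rs (Suc i), rs (Suc i) \<notin> F) \<in> W" by simp
    then show ?thesis by (cases "rs (Suc i) \<in> F") auto
  next
    case False
    with Suc have "\<not> pending_at F ps rs i" and W: "(ps i, rs i, False) \<in> W" by auto
    with response_spec(2)[OF W step] strategy_step[OF W] False
    have "(ps (Suc i), rs (Suc i), pending_at F ps rs (Suc i)) \<in> W" by simp
    then show ?thesis by (cases "pending_at F ps rs (Suc i)") auto
  qed
qed

lemma strategy_wins: "delayed_win F ps rs"
  unfolding delayed_win_def
proof (intro allI impI, rule ccontr)
  fix i assume "ps i \<in> F" and "\<not> (\<exists>k\<ge>i. rs k \<in> F)"
  then have pending: "pending_at F ps rs (i + j)" and notF: "\<forall>k\<ge>i. rs k \<notin> F" for j
    using pending_at_add by auto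
  define f where "f j = \<rho> (ps (i + j), rs (i + j), True)" for j
  have "f (Suc j) < f j" for j
  proof -
    have W: "(ps (i + j), rs (i + j), True) \<in> W"
      using strategy_invariant[of "i + j"] pending[of j] by auto
    from run have "ps (Suc (i + j)) \<in> \<delta> (ps (i + j)) (as (i + j))" by (simp add: spoiler_run_def)
    moreover have "rs (Suc (i + j)) \<notin> F" using notF by simp
    ultimately show ?thesis using response_spec(3)[OF W] strategy_step[OF W] by (simp add: f_def)
  qed
  then show False using wf_no_infinite_down_chainE[OF wf_less, of f] by blast
qed

end

lemma in_delayed_sim:
  assumes "complete_BA Q \<delta>" and "s \<in> Q" and "t \<in> Q" and "(s, t, s \<in> F \<and> t \<notin> F) \<in> W"
  shows "(s, t) \<in> delayed_sim Q \<delta> F"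
  using assms strategy_legal strategy_wins unfolding delayed_sim_def by blast

end

lemma ranked_delayed_sim_Un:
  assumes sim1: "ranked_delayed_sim \<delta> F W1 \<rho>1" and bound1: "\<forall>c. \<rho>1 c < N1"
    and sim2: "ranked_delayed_sim \<delta> F W2 \<rho>2"
  defines "\<rho> \<equiv> \<lambda>c. if c \<in> W1 then \<rho>1 c else N1 + \<rho>2 c"
  shows "ranked_delayed_sim \<delta> F (W1 \<union> W2) \<rho>"
proof
  fix P U b P' a assume PU: "(P, U, b) \<in> W1 \<union> W2" and P': "P' \<in> \<delta> P a"
  show "\<exists>U' \<in> \<delta> U a. (P', U', pending_next F b P' U') \<in> W1 \<union> W2 \<and>
      (b \<and> U' \<notin> F \<longrightarrow> \<rho> (P', U', True) < \<rho> (P, U, True))"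
  proof (cases "(P, U, b) \<in> W1")
    case True
    from ranked_delayed_sim.respond[OF sim1 True P'] obtain U' where "U' \<in> \<delta> U a"
      and W1: "(P', U', pending_next F b P' U') \<in> W1"
      and less: "b \<and> U' \<notin> F \<longrightarrow> \<rho>1 (P', U', True) < \<rho>1 (P, U, True)" by blast
    moreover have "\<rho> (P', U', True) < \<rho> (P, U, True)" if "b" and "U' \<notin> F"
      using that True W1 less by (simp add: \<rho>_def)
    ultimately show ?thesis by blast
  next
    case False
    with PU have "(P, U, b) \<in> W2" by simp
    from ranked_delayed_sim.respond[OF sim2 this P'] obtain U' where "U' \<in> \<delta> U a"
      and W2: "(P', U', pending_next F b P' U') \<in> W2"
      and less: "b \<and> U' \<notin> F \<longrightarrow> \<rho>2 (P', U', True) < \<rho>2 (P, U, True)" by blast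
    moreover have "\<rho> (P', U', True) < \<rho> (P, U, True)" if "b" and "U' \<notin> F"
      using that False less bound1 by (simp add: \<rho>_def trans_less_add1)
    ultimately show ?thesis by blast
  qed
qed

section \<open>Ranked simulations from winning strategies\<close>

definition play_step :: "('q \<Rightarrow> 'a \<Rightarrow> 'q set) \<Rightarrow> 'q set \<Rightarrow> ('q \<Rightarrow> 'q \<times> 'a \<times> 'q \<Rightarrow> 'q)
    \<Rightarrow> (('q \<times> 'q \<times> bool) \<times> ('q \<times> 'q \<times> bool)) set" where
  "play_step \<delta> F \<sigma> = {((P, U, b), (P', U', pending_next F b P' U')) | P U b a P' U'.
     P' \<in> \<delta> P a \<and> U' = \<sigma> U (P, a, P')}"

definition wins_from :: "('q \<Rightarrow> 'a \<Rightarrow> 'q set) \<Rightarrow> 'q set \<Rightarrow> ('q \<Rightarrow> 'q \<times> 'a \<times> 'q \<Rightarrow> 'q)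
    \<Rightarrow> 'q \<times> 'q \<times> bool \<Rightarrow> bool" where
  "wins_from \<delta> F \<sigma> = (\<lambda>(P, U, b). (b \<longrightarrow> U \<notin> F) \<and>
     (\<forall>ps as. spoiler_run \<delta> P ps as \<longrightarrow>
        delayed_win F ps (dup_run \<sigma> U ps as) \<and> (b \<longrightarrow> (\<exists>k. dup_run \<sigma> U ps as k \<in> F))))"

lemma wins_from_start:
  assumes "\<forall>ps as. spoiler_run \<delta> s ps as \<longrightarrow> delayed_win F ps (dup_run \<sigma> t ps as)"
  shows "wins_from \<delta> F \<sigma> (s, t, s \<in> F \<and> t \<notin> F)"
  using assms unfolding wins_from_def delayed_win_def spoiler_run_def by fastforce

lemma spoiler_run_Cons:
  "spoiler_run \<delta> P' ps as \<Longrightarrow> P' \<in> \<delta> P a \<Longrightarrow> spoiler_run \<delta> P (case_nat P ps) (case_nat a as)"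
  by (auto simp: spoiler_run_def split: nat.split)

lemma dup_run_Cons:
  assumes "spoiler_run \<delta> P' ps as"
  shows "dup_run \<sigma> U (case_nat P ps) (case_nat a as) (Suc i) = dup_run \<sigma> (\<sigma> U (P, a, P')) ps as i"
  using assms by (induction i) (auto simp: spoiler_run_def)

lemma delayed_win_tail:
  "delayed_win F ps rs \<Longrightarrow> delayed_win F (\<lambda>i. ps (Suc i)) (\<lambda>i. rs (Suc i))"
  unfolding delayed_win_def by (metis Suc_le_D Suc_le_mono)

lemma wins_from_play_step:
  assumes "wins_from \<delta> F \<sigma> c" and "(c, c') \<in> play_step \<delta> F \<sigma>"
  shows "wins_from \<delta> F \<sigma> c'"
proof -
  from assms(2) obtain P U b a P' U' where c: "c = (P, U, b)"
    and c': "c' = (P', U', pending_next F b P' U')"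
    and P': "P' \<in> \<delta> P a" and U': "U' = \<sigma> U (P, a, P')"
    by (auto simp: play_step_def)
  from assms(1) have bU: "b \<longrightarrow> U \<notin> F" and wins: "\<And>ps as. spoiler_run \<delta> P ps as \<Longrightarrow>
      delayed_win F ps (dup_run \<sigma> U ps as) \<and> (b \<longrightarrow> (\<exists>k. dup_run \<sigma> U ps as k \<in> F))"
    by (auto simp: wins_from_def c)
  have "delayed_win F ps (dup_run \<sigma> U' ps as) \<and>
      (pending_next F b P' U' \<longrightarrow> (\<exists>k. dup_run \<sigma> U' ps as k \<in> F))"
    if run: "spoiler_run \<delta> P' ps as" for ps as
  proof -
    let ?ps = "case_nat P ps" and ?as = "case_nat a as"
    from wins[OF spoiler_run_Cons[OF run P']]
    have win: "delayed_win F ?ps (dup_run \<sigma> U ?ps ?as)"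
      and discharge: "b \<longrightarrow> (\<exists>k. dup_run \<sigma> U ?ps ?as k \<in> F)" by auto
    have tail: "dup_run \<sigma> U ?ps ?as (Suc i) = dup_run \<sigma> U' ps as i" for i
      using dup_run_Cons[OF run] U' by simp
    from delayed_win_tail[OF win] have win': "delayed_win F ps (dup_run \<sigma> U' ps as)"
      by (simp only: tail nat.case(2))
    moreover have "\<exists>k. dup_run \<sigma> U' ps as k \<in> F" if "pending_next F b P' U'"
    proof (cases "P' \<in> F")
      case True
      with run win' show ?thesis unfolding delayed_win_def spoiler_run_def by blast
    next
      case False
      with that discharge obtain k where "dup_run \<sigma> U ?ps ?as k \<in> F" by blast
      with bU that False tail show ?thesis by (cases k) auto
    qed
    ultimately show ?thesis by blast
  qed
  then show ?thesis by (simp add: wins_from_def c')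
qed

lemma wins_from_no_pending_forever:
  assumes wins: "wins_from \<delta> F \<sigma> (f 0)"
    and steps: "\<And>n. (f n, f (Suc n)) \<in> play_step \<delta> F \<sigma>" and pending: "\<And>n. snd (snd (f n))"
  shows False
proof -
  define ps where "ps n = fst (f n)" for n
  define rs where "rs n = fst (snd (f n))" for n
  have "\<exists>a. ps (Suc n) \<in> \<delta> (ps n) a \<and> rs (Suc n) = \<sigma> (rs n) (ps n, a, ps (Suc n))" for n
    using steps[of n] by (auto simp: play_step_def ps_def rs_def)
  then obtain as where as: "\<And>n. ps (Suc n) \<in> \<delta> (ps n) (as n) \<and> rs (Suc n) = \<sigma> (rs n) (ps n, as n, ps (Suc n))"
    by metis
  have run: "spoiler_run \<delta> (ps 0) ps as" using as by (simp add: spoiler_run_def)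
  have dup: "dup_run \<sigma> (rs 0) ps as n = rs n" for n
    by (induction n) (simp_all add: as)
  have notF: "rs n \<notin> F" for n
  proof (cases n)
    case 0
    with wins pending[of 0] show ?thesis by (auto simp: wins_from_def rs_def split: prod.splits)
  next
    case (Suc m)
    with steps[of m] pending[of n] show ?thesis by (auto simp: play_step_def rs_def)
  qed
  from wins pending[of 0] run obtain k where "dup_run \<sigma> (rs 0) ps as k \<in> F"
    by (auto simp: wins_from_def ps_def rs_def split: prod.splits)
  with dup notF show False by simp
qed

lemma card_trancl_Image_less:
  assumes "acyclic E" and "finite (E\<^sup>+ `` {x})" and "(x, y) \<in> E"
  shows "card (E\<^sup>+ `` {y}) < card (E\<^sup>+ `` {x})"
proof (rule psubset_card_mono[OF assms(2)])
  have "y \<in> E\<^sup>+ `` {x}" and "y \<notin> E\<^sup>+ `` {y}"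
    using assms(1,3) by (auto simp: acyclic_def)
  moreover have "E\<^sup>+ `` {y} \<subseteq> E\<^sup>+ `` {x}"
    using assms(3) by (auto intro: trancl_into_trancl2)
  ultimately show "E\<^sup>+ `` {y} \<subset> E\<^sup>+ `` {x}" by blast
qed

locale winning_strategy =
  fixes Q I F :: "'q set" and \<delta> :: "'q \<Rightarrow> 'a::finite \<Rightarrow> 'q set"
    and \<sigma> :: "'q \<Rightarrow> 'q \<times> 'a \<times> 'q \<Rightarrow> 'q" and s t :: 'q
  assumes BA: "is_BA Q \<delta> I F" and legal: "legal_strategy Q \<delta> \<sigma>"
    and start: "s \<in> Q" "t \<in> Q"
    and wins: "\<forall>ps as. spoiler_run \<delta> s ps as \<longrightarrow> delayed_win F ps (dup_run \<sigma> t ps as)"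
begin

definition reachable :: "('q \<times> 'q \<times> bool) set" where
  "reachable = (play_step \<delta> F \<sigma>)\<^sup>* `` {(s, t, s \<in> F \<and> t \<notin> F)}"

definition pending_step :: "(('q \<times> 'q \<times> bool) \<times> ('q \<times> 'q \<times> bool)) set" where
  "pending_step = {(c, c'). (c, c') \<in> play_step \<delta> F \<sigma> \<and> c \<in> reachable \<and> snd (snd c) \<and> snd (snd c')}"

definition rank :: "'q \<times> 'q \<times> bool \<Rightarrow> nat" where
  "rank c = card (pending_step\<^sup>+ `` {c})"

lemma start_reachable: "(s, t, s \<in> F \<and> t \<notin> F) \<in> reachable"
  by (simp add: reachable_def)

lemma reachable_step: "c \<in> reachable \<Longrightarrow> (c, c') \<in> play_step \<delta> F \<sigma> \<Longrightarrow> c' \<in> reachable"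
  by (auto simp: reachable_def intro: rtrancl_into_rtrancl)

lemma reachable_subset: "reachable \<subseteq> Q \<times> Q \<times> UNIV"
proof
  fix c assume "c \<in> reachable"
  then have "((s, t, s \<in> F \<and> t \<notin> F), c) \<in> (play_step \<delta> F \<sigma>)\<^sup>*" by (simp add: reachable_def)
  then show "c \<in> Q \<times> Q \<times> UNIV"
  proof (induction rule: rtrancl_induct)
    case base
    with start show ?case by simp
  next
    case (step c c')
    with BA legal show ?case by (auto simp: play_step_def legal_strategy_def is_BA_def) blast+
  qed
qed

lemma reachable_wins: "c \<in> reachable \<Longrightarrow> wins_from \<delta> F \<sigma> c"
  unfolding reachable_def
proof (simp, induction rule: rtrancl_induct)
  case base
  from wins show ?case by (rule wins_from_start)
next
  case (step c c')
  from step.IH step.hyps(2) show ?case by (rule wins_from_play_step)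
qed

lemma acyclic_pending_step: "acyclic pending_step"
proof -
  have "wf (pending_step\<inverse>)"
    unfolding wf_iff_no_infinite_down_chain
  proof
    assume "\<exists>f. \<forall>i. (f (Suc i), f i) \<in> pending_step\<inverse>"
    then obtain f where "\<And>i. (f i, f (Suc i)) \<in> pending_step" by auto
    with reachable_wins show False
      by (intro wins_from_no_pending_forever[of \<delta> F \<sigma> f]) (auto simp: pending_step_def)
  qed
  then show ?thesis using wf_acyclic by fastforce
qed

lemma pending_step_trancl_Image_subset: "pending_step\<^sup>+ `` {c} \<subseteq> Q \<times> Q \<times> UNIV"
proof -
  have "pending_step \<subseteq> reachable \<times> reachable"
    by (auto simp: pending_step_def intro: reachable_step)
  then have "pending_step\<^sup>+ \<subseteq> reachable \<times> reachable" by (rule trancl_subset_Sigma)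
  with reachable_subset show ?thesis by blast
qed

lemma finite_configs: "finite (Q \<times> Q \<times> (UNIV :: bool set))"
  using BA by (simp add: is_BA_def)

lemma rank_less: "(c, c') \<in> pending_step \<Longrightarrow> rank c' < rank c"
  unfolding rank_def using acyclic_pending_step
  by (rule card_trancl_Image_less) (use finite_subset[OF pending_step_trancl_Image_subset finite_configs] in auto)

lemma rank_bound: "rank c < Suc (card (Q \<times> Q \<times> (UNIV :: bool set)))"
  unfolding rank_def using card_mono[OF finite_configs pending_step_trancl_Image_subset[of c]] by simp

lemma ranked_delayed_sim_reachable: "ranked_delayed_sim \<delta> F reachable rank"
proof
  fix P U b P' a assume PU: "(P, U, b) \<in> reachable" and P': "P' \<in> \<delta> P a"
  define U' where "U' = \<sigma> U (P, a, P')"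
  have "U' \<in> \<delta> U a"
    using legal reachable_subset PU P' unfolding legal_strategy_def U'_def by blast
  moreover have step: "((P, U, b), (P', U', pending_next F b P' U')) \<in> play_step \<delta> F \<sigma>"
    using P' by (auto simp: play_step_def U'_def)
  moreover have "rank (P', U', True) < rank (P, U, True)" if "b" "U' \<notin> F"
    using that step PU by (intro rank_less) (auto simp: pending_step_def)
  ultimately show "\<exists>U' \<in> \<delta> U a. (P', U', pending_next F b P' U') \<in> reachable \<and>
      (b \<and> U' \<notin> F \<longrightarrow> rank (P', U', True) < rank (P, U, True))"
    using reachable_step[OF PU] by blast
qed

end

lemma delayed_sim_imp_ranked_delayed_sim:
  assumes "is_BA Q \<delta> I F" and "(s, t) \<in> delayed_sim Q \<delta> F"
  shows "\<exists>W \<rho> N. ranked_delayed_sim \<delta> F W \<rho> \<and> (s, t, s \<in> F \<and> t \<notin> F) \<in> W \<and> (\<forall>c. \<rho> c < N)"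
proof -
  from assms(2) obtain \<sigma> where "winning_strategy Q I F \<delta> \<sigma> s t"
    using assms(1) unfolding delayed_sim_def winning_strategy_def by blast
  then interpret winning_strategy Q I F \<delta> \<sigma> s t .
  show ?thesis using ranked_delayed_sim_reachable start_reachable rank_bound by blast
qed

section \<open>Chains of ranked simulations\<close>

definition chain_in :: "('q \<times> 'q \<times> bool) set \<Rightarrow> nat \<Rightarrow> (nat \<Rightarrow> 'q) \<Rightarrow> (nat \<Rightarrow> bool) \<Rightarrow> bool" where
  "chain_in W k x c \<longleftrightarrow> (\<forall>j<k. (x j, x (Suc j), c j) \<in> W)"

definition chain_bits :: "'q set \<Rightarrow> (nat \<Rightarrow> 'q) \<Rightarrow> (nat \<Rightarrow> bool) \<Rightarrow> nat \<Rightarrow> bool" where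
  "chain_bits F y c j = pending_next F (c j) (y j) (y (Suc j))"

definition last_true :: "nat \<Rightarrow> (nat \<Rightarrow> bool) \<Rightarrow> nat \<Rightarrow> bool" where
  "last_true k c J \<longleftrightarrow> J < k \<and> c J \<and> (\<forall>j. J < j \<and> j < k \<longrightarrow> \<not> c j)"

lemma chain_in_Cons:
  "(P, x 0, b) \<in> W \<Longrightarrow> chain_in W k x c \<Longrightarrow> chain_in W (Suc k) (case_nat P x) (case_nat b c)"
  by (auto simp: chain_in_def less_Suc_eq_0_disj)

lemma last_true_Cons: "last_true (Suc k) (case_nat b c) (Suc J) \<longleftrightarrow> last_true k c J"
  by (auto simp: last_true_def less_Suc_eq_0_disj)

lemma ex_last_true:
  assumes "c j" and "j < k"
  shows "\<exists>J. last_true k c J"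
proof -
  let ?J = "GREATEST J. J < k \<and> c J"
  have "?J < k \<and> c ?J"
    using GreatestI_nat[of "\<lambda>J. J < k \<and> c J" j k] assms by simp
  moreover have "i \<le> ?J" if "i < k \<and> c i" for i
    using Greatest_le_nat[of "\<lambda>J. J < k \<and> c J" i k] that by simp
  ultimately have "last_true k c ?J" by (auto simp: last_true_def) (meson leD)
  then show ?thesis ..
qed

lemma last_true_chain_bits:
  assumes "last_true k (\<lambda>j. c j \<or> y j \<in> F) J" and "y k \<notin> F"
  shows "last_true k (chain_bits F y c) J"
proof -
  have "y (Suc J) \<notin> F"
    using assms by (cases "Suc J = k") (auto simp: last_true_def)
  with assms show ?thesis by (auto simp: last_true_def chain_bits_def)
qed

context ranked_delayed_sim
begin

primrec chain_response :: "(nat \<Rightarrow> 'q) \<Rightarrow> (nat \<Rightarrow> bool) \<Rightarrow> 'a \<Rightarrow> 'q \<Rightarrow> nat \<Rightarrow> 'q" where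
  "chain_response x c a P' 0 = P'"
| "chain_response x c a P' (Suc j) = response (x j) (x (Suc j)) (c j) a (chain_response x c a P' j)"

lemma chain_response_spec:
  assumes chain: "chain_in W k x c" and move: "P' \<in> \<delta> (x 0) a"
  defines "y \<equiv> chain_response x c a P'"
  shows "j \<le> k \<Longrightarrow> y j \<in> \<delta> (x j) a"
    and "chain_in W k y (chain_bits F y c)"
    and "j < k \<Longrightarrow> c j \<Longrightarrow> chain_bits F y c j \<Longrightarrow> \<rho> (y j, y (Suc j), True) < \<rho> (x j, x (Suc j), True)"
proof -
  have link: "(x j, x (Suc j), c j) \<in> W" if "j < k" for j
    using chain that by (simp add: chain_in_def)
  show moved: "y j \<in> \<delta> (x j) a" if "j \<le> k" for j
    using that
  proof (induction j)
    case 0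
    from move show ?case by (simp add: y_def)
  next
    case (Suc j)
    with response_spec(1)[OF link] show ?case by (simp add: y_def)
  qed
  show "chain_in W k y (chain_bits F y c)"
    using response_spec(2)[OF link moved] by (simp add: chain_in_def chain_bits_def y_def)
  show "\<rho> (y j, y (Suc j), True) < \<rho> (x j, x (Suc j), True)"
    if "j < k" "c j" "chain_bits F y c j"
    using response_spec(3)[OF link moved] that by (simp add: chain_bits_def y_def)
qed

end

locale bounded_ranked_delayed_sim = ranked_delayed_sim \<delta> F W \<rho>
  for \<delta> :: "'q \<Rightarrow> 'a::finite \<Rightarrow> 'q set" and F W \<rho> +
  fixes N :: nat
  assumes rank_bound: "\<rho> c < N"
begin

text \<open>Encodes the lexicographic pair \<open>(k - J, \<rho> (x J, x (Suc J), True))\<close> in \<open>nat\<close>, using \<open>\<rho> < N\<close>.\<close>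

definition chain_rank :: "nat \<Rightarrow> (nat \<Rightarrow> 'q) \<Rightarrow> nat \<Rightarrow> nat" where
  "chain_rank k x J = (k - J) * N + \<rho> (x J, x (Suc J), True)"

lemma chain_rank_Cons: "chain_rank (Suc k) (case_nat P x) (Suc J) = chain_rank k x J"
  by (simp add: chain_rank_def)

definition answering_chain ::
    "bool \<Rightarrow> 'q \<Rightarrow> 'q set \<Rightarrow> nat \<Rightarrow> nat \<Rightarrow> (nat \<Rightarrow> 'q) \<Rightarrow> (nat \<Rightarrow> bool) \<Rightarrow> bool" where
  "answering_chain b P' S R k y e \<longleftrightarrow> chain_in W k y e \<and> y 0 = P' \<and> y k \<in> S \<and>
     (pending_next F b P' (y k) \<longrightarrow> (\<exists>j<k. e j)) \<and>
     (b \<and> y k \<notin> F \<longrightarrow> (\<exists>J. last_true k e J \<and> chain_rank k y J < R))"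

lemma chain_response_pending:
  assumes chain: "chain_in W k x c" and move: "P' \<in> \<delta> (x 0) a"
    and pending: "pending_next F b P' (chain_response x c a P' k)" and "b \<longrightarrow> (\<exists>j<k. c j)"
  shows "\<exists>j<k. chain_bits F (chain_response x c a P') c j"
proof -
  let ?y = "chain_response x c a P'"
  have "\<exists>j<k. c j \<or> ?y j \<in> F"
  proof (cases b)
    case True
    with assms(4) show ?thesis by blast
  next
    case False
    with pending have "?y 0 \<in> F" by simp
    moreover from pending this have "k \<noteq> 0" by (cases k) simp_all
    ultimately show ?thesis by blast
  qed
  then obtain j where "j < k" and "c j \<or> ?y j \<in> F" by blast
  then obtain J where "last_true k (\<lambda>j. c j \<or> ?y j \<in> F) J"
    using ex_last_true[of "\<lambda>j. c j \<or> ?y j \<in> F"] by blast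
  with pending have "last_true k (chain_bits F ?y c) J" by (intro last_true_chain_bits) simp_all
  then show ?thesis by (auto simp: last_true_def)
qed

lemma chain_response_rank_less:
  assumes chain: "chain_in W k x c" and move: "P' \<in> \<delta> (x 0) a"
    and last: "last_true k c J" and notF: "chain_response x c a P' k \<notin> F"
  defines "y \<equiv> chain_response x c a P'"
  shows "\<exists>J'. last_true k (chain_bits F y c) J' \<and> chain_rank k y J' < chain_rank k x J"
proof -
  obtain J' where J': "last_true k (\<lambda>j. c j \<or> y j \<in> F) J'"
    using last ex_last_true[of "\<lambda>j. c j \<or> y j \<in> F" J k] by (auto simp: last_true_def)
  then have last': "last_true k (chain_bits F y c) J'"
    using notF last_true_chain_bits y_def by blast
  have "J \<le> J'" using last J' by (auto simp: last_true_def not_le)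
  have "chain_rank k y J' < chain_rank k x J"
  proof (cases "J' = J")
    case True
    with last last' chain_response_spec(3)[OF chain move, of J] show ?thesis
      by (simp add: chain_rank_def last_true_def y_def)
  next
    case False
    with \<open>J \<le> J'\<close> last' have "Suc (k - J') \<le> k - J" by (auto simp: last_true_def)
    then have "(k - J') * N + N \<le> (k - J) * N"
      using mult_le_mono1[of "Suc (k - J')" "k - J" N] by simp
    then show ?thesis using rank_bound[of "(y J', y (Suc J'), True)"] by (simp add: chain_rank_def)
  qed
  with last' show ?thesis by blast
qed

lemma answering_chain_response:
  assumes chain: "chain_in W k x c" and move: "P' \<in> \<delta> (x 0) a" and last: "b \<Longrightarrow> last_true k c J"
  defines "y \<equiv> chain_response x c a P'"
  shows "answering_chain b P' (\<delta> (x k) a) (chain_rank k x J) k y (chain_bits F y c)"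
  unfolding answering_chain_def
proof (intro conjI impI)
  show "chain_in W k y (chain_bits F y c)" and "y k \<in> \<delta> (x k) a"
    using chain_response_spec[OF chain move] by (simp_all add: y_def)
  show "y 0 = P'" by (simp add: y_def)
  show "\<exists>j<k. chain_bits F y c j" if "pending_next F b P' (y k)"
    using chain_response_pending[OF chain move] that last by (auto simp: last_true_def y_def)
  show "\<exists>J'. last_true k (chain_bits F y c) J' \<and> chain_rank k y J' < chain_rank k x J"
    if "b \<and> y k \<notin> F"
    using chain_response_rank_less[OF chain move] that last by (simp add: y_def)
qed

text \<open>An obligation opened at \<open>p\<close> but not at \<open>q\<close> is recorded in the new link.\<close>

lemma answering_chain_Cons:
  assumes link: "(p, q, p \<in> F \<and> q \<notin> F) \<in> W" and answer: "answering_chain b q S R k y e"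
  shows "answering_chain b p S R (Suc k) (case_nat p y) (case_nat (p \<in> F \<and> q \<notin> F) e)"
proof -
  from answer have "chain_in W k y e" and "y 0 = q" and "y k \<in> S"
    and pending: "pending_next F b q (y k) \<Longrightarrow> \<exists>j<k. e j"
    and rank: "b \<and> y k \<notin> F \<Longrightarrow> \<exists>J. last_true k e J \<and> chain_rank k y J < R"
    by (auto simp: answering_chain_def)
  moreover have "\<exists>j<Suc k. case_nat (p \<in> F \<and> q \<notin> F) e j" if "pending_next F b p (y k)"
  proof (cases "p \<in> F \<and> q \<notin> F")
    case True
    then show ?thesis by (intro exI[of _ 0]) simp
  next
    case False
    with that obtain j where "j < k" and "e j" using pending by auto
    then show ?thesis by (intro exI[of _ "Suc j"]) simp
  qed
  moreover have "\<exists>J. last_true (Suc k) (case_nat (p \<in> F \<and> q \<notin> F) e) J \<and>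
      chain_rank (Suc k) (case_nat p y) J < R" if "b \<and> y k \<notin> F"
  proof -
    from rank[OF that] obtain J where "last_true k e J" and "chain_rank k y J < R" by blast
    then show ?thesis by (intro exI[of _ "Suc J"]) (simp add: last_true_Cons chain_rank_Cons)
  qed
  ultimately show ?thesis
    using link by (simp add: answering_chain_def chain_in_Cons)
qed

end

context bounded_ranked_delayed_sim
begin

lemma answering_chain_mono:
  assumes "answering_chain b P' S R k y e" and "S \<subseteq> S'" and "b \<Longrightarrow> R \<le> R'"
  shows "answering_chain b P' S' R' k y e"
  using assms unfolding answering_chain_def by (meson less_le_trans subsetD)

definition chain_closure :: "('q \<times> 'q \<times> bool) set" where
  "chain_closure = {(P, U, b). \<exists>k x c. chain_in W k x c \<and> x 0 = P \<and> x k = U \<and> (b \<longrightarrow> (\<exists>j<k. c j))}"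

definition closure_rank :: "'q \<times> 'q \<times> bool \<Rightarrow> nat" where
  "closure_rank = (\<lambda>(P, U, _). LEAST m. \<exists>k x c J.
     chain_in W k x c \<and> x 0 = P \<and> x k = U \<and> last_true k c J \<and> m = chain_rank k x J)"

lemma W_subset_chain_closure: "W \<subseteq> chain_closure"
proof
  fix c assume "c \<in> W"
  moreover obtain s t b where "c = (s, t, b)" by (cases c)
  ultimately have "chain_in W 1 (\<lambda>j. if j = 0 then s else t) (\<lambda>_. b)"
    by (simp add: chain_in_def)
  with \<open>c = (s, t, b)\<close> show "c \<in> chain_closure"
    unfolding chain_closure_def by fastforce
qed

lemma chain_closure_witness:
  assumes "(P, U, b) \<in> chain_closure"
  obtains k x c J where "chain_in W k x c" and "x 0 = P" and "x k = U"
    and "b \<longrightarrow> last_true k c J \<and> closure_rank (P, U, True) = chain_rank k x J"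
proof (cases b)
  case False
  with assms that show ?thesis by (auto simp: chain_closure_def)
next
  case True
  let ?is_rank = "\<lambda>m. \<exists>k x c J. chain_in W k x c \<and> x 0 = P \<and> x k = U \<and> last_true k c J \<and>
    m = chain_rank k x J"
  from assms True obtain k x c j where "chain_in W k x c" "x 0 = P" "x k = U" "j < k" "c j"
    by (auto simp: chain_closure_def)
  with ex_last_true[of c j k] have "\<exists>m. ?is_rank m" by blast
  from LeastI_ex[OF this] obtain k x c J where "chain_in W k x c" "x 0 = P" "x k = U"
    "last_true k c J" "(LEAST m. ?is_rank m) = chain_rank k x J" by blast
  with that[of k x c J] show ?thesis by (simp add: closure_rank_def)
qed

lemma closure_rank_le:
  "chain_in W k x c \<Longrightarrow> last_true k c J \<Longrightarrow> closure_rank (x 0, x k, b) \<le> chain_rank k x J"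
  unfolding closure_rank_def by (auto intro!: Least_le)

lemma answering_chain_closure:
  assumes "answering_chain b P' S R k y e"
  shows "(P', y k, pending_next F b P' (y k)) \<in> chain_closure"
    and "b \<Longrightarrow> y k \<notin> F \<Longrightarrow> closure_rank (P', y k, True) < R"
proof -
  from assms show "(P', y k, pending_next F b P' (y k)) \<in> chain_closure"
    by (auto simp: answering_chain_def chain_closure_def)
  assume "b" and "y k \<notin> F"
  with assms obtain J where "chain_in W k y e" "y 0 = P'" "last_true k e J" "chain_rank k y J < R"
    by (auto simp: answering_chain_def)
  then show "closure_rank (P', y k, True) < R"
    using closure_rank_le[of k y e J True] by simp
qed

end

section \<open>Simulation in the extended automaton\<close>

lemma in_add_trans_iff:
  "P' \<in> add_trans \<delta> r a p P a' \<longleftrightarrow> P' \<in> \<delta> P a' \<or> (P = r \<and> a' = a \<and> P' = p)"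
  by (auto simp: add_trans_def)

lemma complete_BA_add_trans: "complete_BA Q \<delta> \<Longrightarrow> complete_BA Q (add_trans \<delta> r a p)"
  by (auto simp: complete_BA_def add_trans_def)

locale added_transition = bounded_ranked_delayed_sim \<delta> F W \<rho> N
  for \<delta> :: "'q \<Rightarrow> 'a::finite \<Rightarrow> 'q set" and F W \<rho> N +
  fixes r p q :: 'q and a :: 'a
  assumes link: "(p, q, p \<in> F \<and> q \<notin> F) \<in> W" and q_succ: "q \<in> \<delta> r a"
begin

lemma ranked_delayed_sim_add_trans: "ranked_delayed_sim (add_trans \<delta> r a p) F chain_closure closure_rank"
proof
  fix P U b P' a' assume PU: "(P, U, b) \<in> chain_closure" and P': "P' \<in> add_trans \<delta> r a p P a'"
  from PU obtain k x c J where chain: "chain_in W k x c" and x0: "x 0 = P" and xk: "x k = U"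
    and last: "b \<longrightarrow> last_true k c J \<and> closure_rank (P, U, True) = chain_rank k x J"
    by (rule chain_closure_witness)
  have "\<exists>k' y e. answering_chain b P' (\<delta> U a') (chain_rank k x J) k' y e"
  proof (cases "P' \<in> \<delta> P a'")
    case True
    with x0 xk last answering_chain_response[OF chain, of P' a' b J] show ?thesis by auto
  next
    case False
    with P' have "P = r" "a' = a" "P' = p" by (auto simp: in_add_trans_iff)
    with x0 xk last q_succ answering_chain_response[OF chain, of q a b J]
    have "answering_chain b q (\<delta> U a') (chain_rank k x J) k
        (chain_response x c a q) (chain_bits F (chain_response x c a q) c)" by auto
    from answering_chain_Cons[OF link this] \<open>P' = p\<close> show ?thesis by blast
  qed
  then obtain k' y e where "answering_chain b P' (\<delta> U a') (chain_rank k x J) k' y e" by blast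
  then have "answering_chain b P' (add_trans \<delta> r a p U a') (closure_rank (P, U, True)) k' y e"
    by (rule answering_chain_mono) (use last in \<open>auto simp: in_add_trans_iff\<close>)
  from answering_chain_closure[OF this] this show "\<exists>U' \<in> add_trans \<delta> r a p U a'.
      (P', U', pending_next F b P' U') \<in> chain_closure \<and>
      (b \<and> U' \<notin> F \<longrightarrow> closure_rank (P', U', True) < closure_rank (P, U, True))"
    by (auto simp: answering_chain_def)
qed

end

theorem lemma12:
  fixes Q I F :: "'q set" and \<delta> :: "'q \<Rightarrow> 'a::finite \<Rightarrow> 'q set"
    and p q r :: 'q and a :: 'a
  assumes "is_BA Q \<delta> I F" and "complete_BA Q \<delta>"
    and "p \<in> Q" and "q \<in> Q" and "r \<in> Q"
    and "q \<in> \<delta> r a"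
    and "(p, q) \<in> delayed_sim Q \<delta> F"
  shows "delayed_sim Q \<delta> F \<subseteq> delayed_sim Q (add_trans \<delta> r a p) F"
proof
  fix st assume st: "st \<in> delayed_sim Q \<delta> F"
  then obtain s t where st_eq: "st = (s, t)" and "s \<in> Q" and "t \<in> Q"
    by (auto simp: delayed_sim_def)
  from delayed_sim_imp_ranked_delayed_sim[OF assms(1)] st st_eq obtain W1 \<rho>1 N1
    where sim1: "ranked_delayed_sim \<delta> F W1 \<rho>1" and start: "(s, t, s \<in> F \<and> t \<notin> F) \<in> W1"
      and bound1: "\<forall>c. \<rho>1 c < N1" by blast
  from delayed_sim_imp_ranked_delayed_sim[OF assms(1,7)] obtain W2 \<rho>2 N2
    where sim2: "ranked_delayed_sim \<delta> F W2 \<rho>2" and link: "(p, q, p \<in> F \<and> q \<notin> F) \<in> W2"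
      and bound2: "\<forall>c. \<rho>2 c < N2" by blast
  let ?\<rho> = "\<lambda>c. if c \<in> W1 then \<rho>1 c else N1 + \<rho>2 c"
  have "added_transition \<delta> F (W1 \<union> W2) ?\<rho> (N1 + N2) r p q a"
    using ranked_delayed_sim_Un[OF sim1 bound1 sim2] bound1 bound2 link assms(6)
    by (auto simp: added_transition_def added_transition_axioms_def bounded_ranked_delayed_sim_def
      bounded_ranked_delayed_sim_axioms_def trans_less_add1)
  then interpret added_transition \<delta> F "W1 \<union> W2" ?\<rho> "N1 + N2" r p q a .
  have "(s, t, s \<in> F \<and> t \<notin> F) \<in> chain_closure"
    using start W_subset_chain_closure by blast
  with ranked_delayed_sim_add_trans complete_BA_add_trans[OF assms(2)] \<open>s \<in> Q\<close> \<open>t \<in> Q\<close>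
  show "st \<in> delayed_sim Q (add_trans \<delta> r a p) F"
    unfolding st_eq by (rule ranked_delayed_sim.in_delayed_sim)
qed

end
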